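(* Let $(T,X)$ be a compact flow (with $T$ a Hausdorff topological group and $X$ a compact Hausdorff space) and let $S$ be a thick subsemigroup of $T$. If $(T,X)$ is Lyapunov $S$-stable, then $(T,X)$ is an a.p. flow.
   Context: $\mathscr U_X$ is the uniformity of $X$; $\varepsilon[A]=\{y:\exists a\in A,(a,y)\in\varepsilon\}$. $S\subseteq T$ is (right) thick if for every compact $K\subseteq T$ there is $t$ with $Kt\subseteq S$; $A\subseteq T$ is (right) syndetic if there is compact $K$ with $Kt\cap A\neq\emptyset$ for all $t$. The flow is Lyapunov $S$-stable if for every $\varepsilon\in\mathscr U_X$ and every $x\in X$ there is $\delta\in\mathscr U_X$ with $t(\delta[x])\subseteq\varepsilon[tx]$ for all $t\in S$. A flow is an a.p. flow if for every $\alpha\in\mathscr U_X$ there is a syndetic $A\subseteq T$ with $Ax\subseteq\alpha[x]$ for all $x\in X$. *)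

theory Defs
  imports "HOL-Analysis.Analysis"
begin

text \<open>The group T is written additively (type class group_add, not necessarily
commutative); the flow is a continuous left action act of T on X.\<close>

definition flow :: "('t::topological_group_add \<Rightarrow> 'x::topological_space \<Rightarrow> 'x) \<Rightarrow> bool" where
  "flow act \<longleftrightarrow> continuous_on UNIV (\<lambda>(t, x). act t x)
      \<and> (\<forall>x. act 0 x = x) \<and> (\<forall>s t x. act (s + t) x = act s (act t x))"

text \<open>The (unique) uniformity of a compact Hausdorff space: all neighbourhoods of the diagonal.\<close>
definition unif :: "('x::topological_space \<times> 'x) set set" where
  "unif = {e. \<exists>W. open W \<and> Id \<subseteq> W \<and> W \<subseteq> e}"

definition ent :: "('x \<times> 'x) set \<Rightarrow> 'x set \<Rightarrow> 'x set" where
  "ent e A = {y. \<exists>a\<in>A. (a, y) \<in> e}"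

definition subsemigroup :: "'t::plus set \<Rightarrow> bool" where
  "subsemigroup S \<longleftrightarrow> (\<forall>a\<in>S. \<forall>b\<in>S. a + b \<in> S)"

definition thick :: "'t::{topological_space, plus} set \<Rightarrow> bool" where
  "thick S \<longleftrightarrow> (\<forall>K. compact K \<longrightarrow> (\<exists>t. (\<lambda>k. k + t) ` K \<subseteq> S))"

definition syndetic :: "'t::{topological_space, plus} set \<Rightarrow> bool" where
  "syndetic A \<longleftrightarrow> (\<exists>K. compact K \<and> (\<forall>t. (\<lambda>k. k + t) ` K \<inter> A \<noteq> {}))"

definition lyapunov_stable :: "('t \<Rightarrow> 'x::topological_space \<Rightarrow> 'x) \<Rightarrow> 't set \<Rightarrow> bool" where
  "lyapunov_stable act S \<longleftrightarrow> (\<forall>e\<in>unif. \<forall>x. \<exists>d\<in>unif. \<forall>t\<in>S.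
      act t ` ent d {x} \<subseteq> ent e {act t x})"

definition ap_flow :: "('t::{topological_space, plus} \<Rightarrow> 'x::topological_space \<Rightarrow> 'x) \<Rightarrow> bool" where
  "ap_flow act \<longleftrightarrow> (\<forall>a\<in>unif. \<exists>A. syndetic A \<and> (\<forall>x. (\<lambda>s. act s x) ` A \<subseteq> ent a {x}))"

end

theory Submission
  imports Defs
begin

text \<open>The uniformity of the compact Hausdorff space \<open>X\<close> is generated by continuous
  pseudometrics (every entourage contains a unit ball, by Urysohn), so it suffices to show that
  \<open>{x \<mapsto> t x | t \<in> T}\<close> is totally bounded for the uniform distance of each such pseudometric \<open>d\<close>:
  then for each \<open>t\<close> some \<open>k\<close> of a finite net is close to \<open>- t\<close>, so \<open>k + t\<close> moves no point far,
  and the return times form a syndetic set.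

  Lyapunov \<open>S\<close>-stability makes the maps of \<open>S\<close> uniformly equicontinuous, hence totally bounded
  by Arzela--Ascoli. For \<open>r \<in> S\<close>, two of the multiples \<open>r, 2r, \<dots>\<close> fall into one ball of a net,
  so some positive multiple \<open>c r\<close> is close to the identity and \<open>- r\<close> is close to \<open>(c - 1) r\<close>;
  thus \<open>- S\<close> is totally bounded too. Finally thickness gives, for each \<open>t\<close>, some \<open>r\<close> with
  \<open>r, t + r \<in> S\<close>, and \<open>t = (t + r) + (- r)\<close> is approximated by sums of net elements, using
  equicontinuity of \<open>t + r\<close>.\<close>

definition cont_pseudometric :: "('x::topological_space \<Rightarrow> 'x \<Rightarrow> real) \<Rightarrow> bool" where
  "cont_pseudometric d \<longleftrightarrow> continuous_on UNIV (\<lambda>p. d (fst p) (snd p)) \<and> (\<forall>x. d x x = 0)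
     \<and> (\<forall>x y. d x y = d y x) \<and> (\<forall>x y z. d x z \<le> d x y + d y z)"

definition uniformly_equicontinuous ::
    "('y \<Rightarrow> 'y \<Rightarrow> real) \<Rightarrow> ('i \<Rightarrow> 'x::topological_space \<Rightarrow> 'y) \<Rightarrow> 'i set \<Rightarrow> bool" where
  "uniformly_equicontinuous d F I \<longleftrightarrow>
     (\<forall>e>0. \<exists>V\<in>unif. \<forall>(x, y)\<in>V. \<forall>i\<in>I. d (F i x) (F i y) < e)"

definition uniformly_totally_bounded ::
    "('y \<Rightarrow> 'y \<Rightarrow> real) \<Rightarrow> ('i \<Rightarrow> 'x \<Rightarrow> 'y) \<Rightarrow> 'i set \<Rightarrow> bool" where
  "uniformly_totally_bounded d F I \<longleftrightarrow>
     (\<forall>e>0. \<exists>N. finite N \<and> (\<forall>i\<in>I. \<exists>n\<in>N. \<forall>x. d (F i x) (F n x) < e))"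

lemma cont_pseudometric_refl [simp]: "cont_pseudometric d \<Longrightarrow> d x x = 0"
  by (simp add: cont_pseudometric_def)

lemma cont_pseudometric_sym: "cont_pseudometric d \<Longrightarrow> d x y = d y x"
  unfolding cont_pseudometric_def by blast

lemma cont_pseudometric_triangle_less:
  assumes "cont_pseudometric d" "d x y < a" "d y z < b"
  shows "d x z < a + b"
  using assms unfolding cont_pseudometric_def by (smt (verit))

lemma cont_pseudometric_entourage:
  assumes "cont_pseudometric d" "e > 0"
  shows "{(x, y). d x y < e} \<in> unif"
proof -
  have "open {p. d (fst p) (snd p) < e}"
    using assms(1) by (intro open_Collect_less continuous_on_const) (simp add: cont_pseudometric_def)
  moreover have "{p. d (fst p) (snd p) < e} = {(x, y). d x y < e}"
    by auto
  moreover have "Id \<subseteq> {(x, y). d x y < e}"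
    using assms by auto
  ultimately show ?thesis
    unfolding unif_def by auto
qed

lemma unif_finite_net:
  fixes V :: "('x::topological_space \<times> 'x) set"
  assumes "compact (UNIV :: 'x set)" "V \<in> unif"
  obtains C where "finite C" "\<And>x. \<exists>c\<in>C. (c, x) \<in> V"
proof -
  obtain W where W: "open W" "Id \<subseteq> W" "W \<subseteq> V"
    using assms(2) unfolding unif_def by blast
  have "open (Pair c -` W)" for c
    using W(1) by (intro continuous_open_vimage continuous_intros)
  moreover have "UNIV \<subseteq> (\<Union>c. Pair c -` W)"
    using W(2) by auto
  ultimately obtain C where C: "finite C" "UNIV \<subseteq> (\<Union>c\<in>C. Pair c -` W)"
    by (rule compactE_image[OF assms(1)])
  have "\<exists>c\<in>C. (c, x) \<in> V" for x
    using C(2) W(3) by fastforce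
  with C(1) show thesis
    using that by blast
qed

lemma compact_t2_separating_function:
  fixes a b :: "'x::t2_space"
  assumes "compact (UNIV :: 'x set)" "a \<noteq> b"
  obtains f :: "'x \<Rightarrow> real" where "continuous_on UNIV f" "f a = 0" "f b = 1"
proof -
  have "Hausdorff_space (euclidean :: 'x topology)"
    unfolding Hausdorff_space_def using hausdorff by (auto simp: disjnt_def)
  moreover have "compact_space (euclidean :: 'x topology)"
    using assms(1) by (simp add: compact_space_def)
  ultimately have "normal_space (euclidean :: 'x topology)"
    using compact_Hausdorff_or_regular_imp_normal_space by blast
  then obtain f where f: "continuous_map euclidean (top_of_set {0..1::real}) f"
      "f ` {a} \<subseteq> {0}" "f ` {b} \<subseteq> {1}"
    using Urysohn_lemma[of euclidean "{a}" "{b}" 0 1] assms(2) by (auto simp: disjnt_def)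
  have "continuous_on UNIV f"
    using f(1) by (simp add: continuous_map_in_subtopology)
  moreover have "f a = 0" "f b = 1"
    using f(2,3) by auto
  ultimately show thesis
    using that by blast
qed

lemma continuous_on_abs_diff_pair:
  fixes f :: "'x::topological_space \<Rightarrow> real"
  assumes "continuous_on UNIV f"
  shows "continuous_on UNIV (\<lambda>q. \<bar>f (fst q) - f (snd q)\<bar>)"
proof -
  have "continuous_on UNIV (\<lambda>q. f (fst q))" "continuous_on UNIV (\<lambda>q. f (snd q))"
    by (rule continuous_on_compose2[OF assms], (intro continuous_intros)?, simp)+
  then show ?thesis
    by (intro continuous_intros)
qed

lemma cont_pseudometric_sum_abs_diff:
  fixes Fs :: "('x::topological_space \<Rightarrow> real) set"
  assumes "\<And>f. f \<in> Fs \<Longrightarrow> continuous_on UNIV f"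
  shows "cont_pseudometric (\<lambda>x y. \<Sum>f\<in>Fs. \<bar>f x - f y\<bar>)"
  unfolding cont_pseudometric_def
proof (intro conjI allI)
  show "continuous_on UNIV (\<lambda>p. \<Sum>f\<in>Fs. \<bar>f (fst p) - f (snd p)\<bar>)"
    using assms continuous_on_abs_diff_pair by (intro continuous_on_sum) blast
  show "(\<Sum>f\<in>Fs. \<bar>f x - f z\<bar>) \<le> (\<Sum>f\<in>Fs. \<bar>f x - f y\<bar>) + (\<Sum>f\<in>Fs. \<bar>f y - f z\<bar>)" for x y z
  proof -
    have "(\<Sum>f\<in>Fs. \<bar>f x - f z\<bar>) \<le> (\<Sum>f\<in>Fs. \<bar>f x - f y\<bar> + \<bar>f y - f z\<bar>)"
      by (intro sum_mono) linarith
    then show ?thesis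
      by (simp add: sum.distrib)
  qed
qed (auto simp: abs_minus_commute)

lemma cont_pseudometric_scale:
  assumes "cont_pseudometric d" "c \<ge> 0"
  shows "cont_pseudometric (\<lambda>x y. c * d x y)"
  unfolding cont_pseudometric_def
proof (intro conjI allI)
  show "continuous_on UNIV (\<lambda>p. c * d (fst p) (snd p))"
    using assms(1) unfolding cont_pseudometric_def by (intro continuous_on_mult_left) blast
  show "c * d x z \<le> c * d x y + c * d y z" for x y z
    using assms mult_left_mono[of "d x z" "d x y + d y z" c]
    unfolding cont_pseudometric_def by (simp add: distrib_left)
qed (use assms cont_pseudometric_sym in auto)

text \<open>Separate each pair off the diagonal by an Urysohn function and cover the compact
  complement of \<open>W\<close> by finitely many of the open sets where these functions jump by more than
  \<open>1/2\<close>.\<close>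
lemma finite_separating_functions_outside:
  fixes W :: "('x::t2_space \<times> 'x) set"
  assumes cpt: "compact (UNIV :: 'x set)" and W: "open W" "Id \<subseteq> W"
  obtains Fs :: "('x \<Rightarrow> real) set" where "finite Fs" "\<And>f. f \<in> Fs \<Longrightarrow> continuous_on UNIV f"
    "\<And>x y. (x, y) \<notin> W \<Longrightarrow> \<exists>f\<in>Fs. 1/2 < \<bar>f x - f y\<bar>"
proof -
  have "compact (UNIV \<times> UNIV :: ('x \<times> 'x) set)"
    using cpt by (rule compact_Times[OF cpt])
  then have compact_C: "compact (- W)"
    using compact_Int_closed[of UNIV "- W"] W(1) by auto
  have "\<exists>f :: 'x \<Rightarrow> real. continuous_on UNIV f \<and> f (fst p) = 0 \<and> f (snd p) = 1" if "p \<in> - W" for p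
  proof -
    have "fst p \<noteq> snd p"
      using that W(2) by (cases p) auto
    then show ?thesis
      using compact_t2_separating_function[OF cpt] by metis
  qed
  then obtain F :: "'x \<times> 'x \<Rightarrow> 'x \<Rightarrow> real" where
    F: "\<And>p. p \<in> - W \<Longrightarrow> continuous_on UNIV (F p) \<and> F p (fst p) = 0 \<and> F p (snd p) = 1"
    by metis
  define U where "U p = {q. 1/2 < \<bar>F p (fst q) - F p (snd q)\<bar>}" for p
  have "open (U p)" if "p \<in> - W" for p
    unfolding U_def using continuous_on_abs_diff_pair F[OF that]
    by (intro open_Collect_less continuous_on_const) blast+
  moreover have "- W \<subseteq> (\<Union>p\<in>- W. U p)"
  proof
    fix p assume "p \<in> - W"
    then have "p \<in> U p"
      using F[of p] by (simp add: U_def)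
    with \<open>p \<in> - W\<close> show "p \<in> (\<Union>p\<in>- W. U p)"
      by blast
  qed
  ultimately obtain D where D: "D \<subseteq> - W" "finite D" "- W \<subseteq> (\<Union>p\<in>D. U p)"
    using compactE_image[OF compact_C, of "- W" U] by blast
  show thesis
  proof (rule that[of "F ` D"])
    show "finite (F ` D)"
      using D(2) by blast
    show "continuous_on UNIV f" if "f \<in> F ` D" for f
      using that D(1) F by blast
    show "\<exists>f\<in>F ` D. 1/2 < \<bar>f x - f y\<bar>" if xy: "(x, y) \<notin> W" for x y
    proof -
      obtain p where "p \<in> D" "(x, y) \<in> U p"
        using xy D(3) by blast
      then show ?thesis
        unfolding U_def by auto
    qed
  qed
qed

lemma cont_pseudometric_inside_entourage:
  fixes V :: "('x::t2_space \<times> 'x) set"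
  assumes cpt: "compact (UNIV :: 'x set)" and "V \<in> unif"
  obtains d where "cont_pseudometric d" "\<And>x y. d x y < 1 \<Longrightarrow> (x, y) \<in> V"
proof -
  obtain W where W: "open W" "Id \<subseteq> W" "W \<subseteq> V"
    using assms(2) unfolding unif_def by blast
  obtain Fs :: "('x \<Rightarrow> real) set" where Fs: "finite Fs" "\<And>f. f \<in> Fs \<Longrightarrow> continuous_on UNIV f"
    "\<And>x y. (x, y) \<notin> W \<Longrightarrow> \<exists>f\<in>Fs. 1/2 < \<bar>f x - f y\<bar>"
    using finite_separating_functions_outside[OF cpt W(1,2)] by blast
  define d where "d x y = (\<Sum>f\<in>Fs. \<bar>f x - f y\<bar>)" for x y
  have "cont_pseudometric d"
    unfolding d_def using Fs(2) by (rule cont_pseudometric_sum_abs_diff)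
  moreover have "(x, y) \<in> V" if "2 * d x y < 1" for x y
  proof (rule ccontr)
    assume "(x, y) \<notin> V"
    then obtain f where "f \<in> Fs" "1/2 < \<bar>f x - f y\<bar>"
      using Fs(3) W(3) by blast
    moreover have "\<bar>f x - f y\<bar> \<le> d x y"
      unfolding d_def using \<open>f \<in> Fs\<close> Fs(1) by (intro member_le_sum) auto
    ultimately show False
      using that by simp
  qed
  ultimately show thesis
    using that[of "\<lambda>x y. 2 * d x y"] cont_pseudometric_scale[of d 2] by simp
qed

lemma lyapunov_stable_imp_uniformly_equicontinuous:
  fixes act :: "'t \<Rightarrow> 'x::topological_space \<Rightarrow> 'x"
  assumes ly: "lyapunov_stable act S" and d: "cont_pseudometric d"
  shows "uniformly_equicontinuous d act S"
  unfolding uniformly_equicontinuous_def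
proof (intro allI impI)
  fix e :: real assume "e > 0"
  define E where "E = {(x, y). d x y < e/2}"
  have "E \<in> unif"
    unfolding E_def using d \<open>e > 0\<close> by (intro cont_pseudometric_entourage) auto
  then have "\<forall>x. \<exists>D\<in>unif. \<forall>s\<in>S. act s ` ent D {x} \<subseteq> ent E {act s x}"
    using ly unfolding lyapunov_stable_def by blast
  then obtain D where D: "\<And>x. D x \<in> unif" "\<And>x s. s \<in> S \<Longrightarrow> act s ` ent (D x) {x} \<subseteq> ent E {act s x}"
    by metis
  have "\<forall>x. \<exists>W. open W \<and> Id \<subseteq> W \<and> W \<subseteq> D x"
    using D(1) unfolding unif_def by blast
  then obtain W where W: "\<And>x. open (W x)" "\<And>x. Id \<subseteq> W x" "\<And>x. W x \<subseteq> D x"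
    by metis
  define G where "G x = Pair x -` W x" for x
  have near: "d (act s x) (act s y) < e/2" if "y \<in> G x" "s \<in> S" for x y s
  proof -
    have "y \<in> ent (D x) {x}"
      using that(1) W(3)[of x] by (auto simp: G_def ent_def)
    then have "act s y \<in> ent E {act s x}"
      using D(2)[OF that(2), of x] by blast
    then show ?thesis
      by (simp add: ent_def E_def)
  qed
  define V where "V = (\<Union>x. G x \<times> G x)"
  have "open V"
    unfolding V_def G_def using W(1) by (intro open_UN ballI open_Times continuous_open_vimage continuous_intros)
  moreover have "Id \<subseteq> V"
    unfolding V_def G_def using W(2) by blast
  ultimately have "V \<in> unif"
    unfolding unif_def by blast
  moreover have "d (act s y) (act s z) < e" if yz: "(y, z) \<in> V" and s: "s \<in> S" for y z s
  proof -
    obtain x where "y \<in> G x" "z \<in> G x"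
      using yz unfolding V_def by blast
    then have "d (act s y) (act s x) < e/2" "d (act s x) (act s z) < e/2"
      using near[OF _ s] cont_pseudometric_sym[OF d] by metis+
    from cont_pseudometric_triangle_less[OF d this] show ?thesis
      by simp
  qed
  ultimately show "\<exists>V\<in>unif. \<forall>(x, y)\<in>V. \<forall>i\<in>S. d (act i x) (act i y) < e"
    by blast
qed

lemma cont_pseudometric_finite_rounding:
  fixes d :: "'x::topological_space \<Rightarrow> 'x \<Rightarrow> real"
  assumes "compact (UNIV :: 'x set)" "cont_pseudometric d" "e > 0"
  obtains Q \<rho> where "finite Q" "\<And>y. \<rho> y \<in> Q" "\<And>y. d (\<rho> y) y < e"
proof -
  from unif_finite_net[OF assms(1) cont_pseudometric_entourage[OF assms(2,3)]]
  obtain Q where Q: "finite Q" "\<And>y. \<exists>q\<in>Q. (q, y) \<in> {(x, y). d x y < e}"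
    by blast
  then have "\<forall>y. \<exists>q. q \<in> Q \<and> d q y < e"
    by auto
  with Q(1) show thesis
    using that by metis
qed

lemma finite_image_representatives:
  assumes "finite (g ` I)"
  obtains N where "finite N" "N \<subseteq> I" "\<And>i. i \<in> I \<Longrightarrow> \<exists>n\<in>N. g n = g i"
proof
  show "finite (inv_into I g ` g ` I)"
    using assms by blast
  show "inv_into I g ` g ` I \<subseteq> I"
    by (auto intro: inv_into_into)
  show "\<exists>n\<in>inv_into I g ` g ` I. g n = g i" if "i \<in> I" for i
  proof
    show "g (inv_into I g (g i)) = g i"
      using that by (intro f_inv_into_f imageI)
    show "inv_into I g (g i) \<in> inv_into I g ` g ` I"
      using that by blast
  qed
qed

text \<open>Arzela--Ascoli: on a finite net \<open>C\<close> of the domain the members of the family take only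
  finitely many values after rounding to a finite net of the codomain, and members with the same
  rounded values on \<open>C\<close> are uniformly close by equicontinuity.\<close>
lemma uniformly_equicontinuous_imp_totally_bounded:
  fixes F :: "'i \<Rightarrow> 'x::topological_space \<Rightarrow> 'y::topological_space"
  assumes cpt_X: "compact (UNIV :: 'x set)" and cpt_Y: "compact (UNIV :: 'y set)"
    and d: "cont_pseudometric d" and eq: "uniformly_equicontinuous d F I"
  shows "uniformly_totally_bounded d F I"
  unfolding uniformly_totally_bounded_def
proof (intro allI impI)
  fix e :: real assume "e > 0"
  then obtain V where "V \<in> unif" and V: "\<forall>(x, y)\<in>V. \<forall>i\<in>I. d (F i x) (F i y) < e/3"
    using eq unfolding uniformly_equicontinuous_def by (meson divide_pos_pos zero_less_numeral)
  obtain C where C: "finite C" "\<And>x. \<exists>c\<in>C. (c, x) \<in> V"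
    using unif_finite_net[OF cpt_X \<open>V \<in> unif\<close>] by blast
  obtain Q \<rho> where Q: "finite Q" "\<And>y. \<rho> y \<in> Q" "\<And>y. d (\<rho> y) y < e/6"
    using cont_pseudometric_finite_rounding[OF cpt_Y d, of "e/6"] \<open>e > 0\<close> by auto
  define sig where "sig i = restrict (\<rho> \<circ> F i) C" for i
  have "sig ` I \<subseteq> C \<rightarrow>\<^sub>E Q"
    using Q(2) by (auto simp: sig_def)
  then have "finite (sig ` I)"
    using C(1) Q(1) finite_PiE finite_subset by metis
  from finite_image_representatives[OF this]
  obtain N where N: "finite N" "N \<subseteq> I" "\<And>i. i \<in> I \<Longrightarrow> \<exists>n\<in>N. sig n = sig i"
    by blast
  have "\<forall>x. d (F i x) (F n x) < e" if "i \<in> I" "n \<in> I" "sig n = sig i" for i n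
  proof
    fix x
    obtain c where "c \<in> C" "(c, x) \<in> V"
      using C(2) by blast
    have "\<rho> (F n c) = \<rho> (F i c)"
      using fun_cong[OF \<open>sig n = sig i\<close>, of c] \<open>c \<in> C\<close> by (simp add: sig_def)
    then have "d (F i c) (\<rho> (F i c)) < e/6" "d (\<rho> (F i c)) (F n c) < e/6"
      using Q(3) cont_pseudometric_sym[OF d] by metis+
    then have "d (F i c) (F n c) < e/6 + e/6"
      by (rule cont_pseudometric_triangle_less[OF d])
    moreover have "d (F i x) (F i c) < e/3" "d (F n c) (F n x) < e/3"
      using V \<open>(c, x) \<in> V\<close> that(1,2) cont_pseudometric_sym[OF d] by fastforce+
    ultimately have "d (F i x) (F n x) < e/3 + (e/6 + e/6) + e/3"
      using cont_pseudometric_triangle_less[OF d] by blast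
    then show "d (F i x) (F n x) < e"
      by simp
  qed
  then show "\<exists>N. finite N \<and> (\<forall>i\<in>I. \<exists>n\<in>N. \<forall>x. d (F i x) (F n x) < e)"
    using N by (metis subsetD)
qed

fun nat_mult :: "nat \<Rightarrow> 'a::monoid_add \<Rightarrow> 'a" where
  "nat_mult 0 r = 0"
| "nat_mult (Suc l) r = nat_mult l r + r"

lemma nat_mult_add: "nat_mult (a + b) r = nat_mult a r + nat_mult b r"
  by (induction b) (simp_all add: add.assoc)

lemma subsemigroup_nat_mult:
  assumes "subsemigroup S" "r \<in> S" "l \<ge> 1"
  shows "nat_mult l r \<in> S"
  using assms(3)
proof (induction l)
  case (Suc l)
  then show ?case
    using assms(1,2) by (cases l) (auto simp: subsemigroup_def)
qed simp

lemma flow_add: "flow act \<Longrightarrow> act (s + t) x = act s (act t x)"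
  by (simp add: flow_def)

lemma flow_zero: "flow act \<Longrightarrow> act 0 x = x"
  by (simp add: flow_def)

lemma flow_neg_left: "flow act \<Longrightarrow> act (- u) (act u x) = x"
  by (metis flow_add flow_zero add.left_inverse)

lemma flow_neg_right: "flow act \<Longrightarrow> act u (act (- u) x) = x"
  by (metis flow_add flow_zero add.right_inverse)

text \<open>Pigeonhole: two of the multiples \<open>r, 2r, \<dots>\<close> lie in the same ball of a finite net, and their
  difference is again a positive multiple of \<open>r\<close>.\<close>
lemma flow_nat_mult_near_zero:
  fixes act :: "'t::topological_group_add \<Rightarrow> 'x::topological_space \<Rightarrow> 'x"
  assumes fl: "flow act" and d: "cont_pseudometric d" and tb: "uniformly_totally_bounded d act S"
    and sg: "subsemigroup S" and r: "r \<in> S" and "e > 0"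
  obtains c where "c \<ge> 1" "\<And>y. d (act (nat_mult c r) y) y < e"
proof -
  obtain N where N: "finite N" "\<forall>i\<in>S. \<exists>n\<in>N. \<forall>x. d (act i x) (act n x) < e/2"
    using tb \<open>e > 0\<close> unfolding uniformly_totally_bounded_def by (meson half_gt_zero)
  define L where "L = {1..card N + 1}"
  have "\<forall>l\<in>L. \<exists>n\<in>N. \<forall>x. d (act (nat_mult l r) x) (act n x) < e/2"
    using N(2) subsemigroup_nat_mult[OF sg r] by (simp add: L_def)
  then obtain \<phi> where \<phi>: "\<And>l. l \<in> L \<Longrightarrow> \<phi> l \<in> N"
      "\<And>l x. l \<in> L \<Longrightarrow> d (act (nat_mult l r) x) (act (\<phi> l) x) < e/2"
    by metis
  have "card (\<phi> ` L) \<le> card N"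
    using \<phi>(1) N(1) by (intro card_mono) auto
  then have "\<not> inj_on \<phi> L"
    by (intro pigeonhole) (simp add: L_def)
  then obtain a b where ab: "a \<in> L" "b \<in> L" "b < a" "\<phi> a = \<phi> b"
    unfolding inj_on_def by (metis linorder_neq_iff)
  have close: "d (act (nat_mult a r) z) (act (nat_mult b r) z) < e/2 + e/2" for z
    using \<phi>(2)[OF ab(1), of z] \<phi>(2)[OF ab(2), of z] ab(4) cont_pseudometric_sym[OF d]
    by (metis cont_pseudometric_triangle_less[OF d])
  show thesis
  proof (rule that)
    show "a - b \<ge> 1"
      using ab(3) by simp
    fix y
    have "nat_mult a r = nat_mult (a - b) r + nat_mult b r"
      using ab(3) nat_mult_add[of "a - b" b r] by simp
    then have "act (nat_mult a r) (act (- nat_mult b r) y) = act (nat_mult (a - b) r) y"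
      by (simp add: flow_add[OF fl] flow_neg_right[OF fl])
    then show "d (act (nat_mult (a - b) r) y) y < e"
      using close[of "act (- nat_mult b r) y"] by (simp add: flow_neg_right[OF fl])
  qed
qed

text \<open>If \<open>c r\<close> is close to the identity, then \<open>- r\<close> is close to \<open>(c - 1) r\<close>, which is \<open>0\<close> or in \<open>S\<close>.\<close>
lemma uniformly_totally_bounded_uminus:
  fixes act :: "'t::topological_group_add \<Rightarrow> 'x::topological_space \<Rightarrow> 'x"
  assumes fl: "flow act" and d: "cont_pseudometric d" and sg: "subsemigroup S"
    and tb: "uniformly_totally_bounded d act S"
  shows "uniformly_totally_bounded d act (uminus ` S)"
  unfolding uniformly_totally_bounded_def
proof (intro allI impI)
  fix e :: real assume "e > 0"
  obtain N where N: "finite N" "\<forall>i\<in>S. \<exists>n\<in>N. \<forall>x. d (act i x) (act n x) < e/2"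
    using tb \<open>e > 0\<close> unfolding uniformly_totally_bounded_def by (meson half_gt_zero)
  have "\<exists>m\<in>insert 0 N. \<forall>y. d (act (- r) y) (act m y) < e" if r: "r \<in> S" for r
  proof -
    obtain c where c: "c \<ge> 1" "\<And>y. d (act (nat_mult c r) y) y < e/2"
      using flow_nat_mult_near_zero[OF fl d tb sg r, of "e/2"] \<open>e > 0\<close> by auto
    have near_pred: "d (act (- r) y) (act (nat_mult (c - 1) r) y) < e/2" for y
    proof -
      have "nat_mult c r = nat_mult (c - 1) r + r"
        using c(1) by (cases c) auto
      then have "act (nat_mult c r) (act (- r) y) = act (nat_mult (c - 1) r) y"
        by (simp add: flow_add[OF fl] flow_neg_right[OF fl])
      then show ?thesis
        using c(2)[of "act (- r) y"] cont_pseudometric_sym[OF d] by metis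
    qed
    have "\<exists>m\<in>insert 0 N. \<forall>y. d (act (nat_mult (c - 1) r) y) (act m y) < e/2"
    proof (cases "c = 1")
      case True
      then show ?thesis
        using d \<open>e > 0\<close> by simp
    next
      case False
      then show ?thesis
        using c(1) subsemigroup_nat_mult[OF sg r] N(2) by simp
    qed
    then obtain m where "m \<in> insert 0 N" and m: "\<And>y. d (act (nat_mult (c - 1) r) y) (act m y) < e/2"
      by blast
    have "d (act (- r) y) (act m y) < e/2 + e/2" for y
      using cont_pseudometric_triangle_less[OF d near_pred m] .
    with \<open>m \<in> insert 0 N\<close> show ?thesis
      by auto
  qed
  then show "\<exists>M. finite M \<and> (\<forall>i\<in>uminus ` S. \<exists>m\<in>M. \<forall>y. d (act i y) (act m y) < e)"
    using N(1) by blast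
qed

lemma thick_uniformly_totally_bounded_UNIV:
  fixes act :: "'t::topological_group_add \<Rightarrow> 'x::t2_space \<Rightarrow> 'x"
  assumes cpt: "compact (UNIV :: 'x set)" and fl: "flow act" and th: "thick S"
    and d: "cont_pseudometric d"
    and eq: "uniformly_equicontinuous d act S" and tb: "uniformly_totally_bounded d act S"
    and tb_uminus: "\<And>d'. cont_pseudometric d' \<Longrightarrow> uniformly_totally_bounded d' act (uminus ` S)"
  shows "uniformly_totally_bounded d act UNIV"
  unfolding uniformly_totally_bounded_def
proof (intro allI impI)
  fix e :: real assume "e > 0"
  obtain N where N: "finite N" "\<forall>i\<in>S. \<exists>n\<in>N. \<forall>x. d (act i x) (act n x) < e/2"
    using tb \<open>e > 0\<close> unfolding uniformly_totally_bounded_def by (meson half_gt_zero)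
  obtain V where "V \<in> unif" and V: "\<forall>(x, y)\<in>V. \<forall>i\<in>S. d (act i x) (act i y) < e/2"
    using eq \<open>e > 0\<close> unfolding uniformly_equicontinuous_def by (meson half_gt_zero)
  obtain d' where d': "cont_pseudometric d'" "\<And>x y. d' x y < 1 \<Longrightarrow> (x, y) \<in> V"
    using cont_pseudometric_inside_entourage[OF cpt \<open>V \<in> unif\<close>] by blast
  obtain M where M: "finite M" "\<forall>i\<in>uminus ` S. \<exists>m\<in>M. \<forall>y. d' (act i y) (act m y) < 1"
    using tb_uminus[OF d'(1)] unfolding uniformly_totally_bounded_def by (meson zero_less_one)
  define K where "K = (\<lambda>(n, m). n + m) ` (N \<times> M)"
  have "\<exists>k\<in>K. \<forall>y. d (act t y) (act k y) < e" for t
  proof -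
    obtain r where "(\<lambda>k. k + r) ` {0, t} \<subseteq> S"
      using th unfolding thick_def by (meson compact_insert compact_sing)
    then have r: "- r \<in> uminus ` S" and tr: "t + r \<in> S"
      by auto
    obtain n where "n \<in> N" and n: "\<And>x. d (act (t + r) x) (act n x) < e/2"
      using N(2) tr by blast
    obtain m where "m \<in> M" and m: "\<And>y. (act (- r) y, act m y) \<in> V"
      using M(2) r d'(2) by blast
    show ?thesis
    proof
      show "n + m \<in> K"
        unfolding K_def using \<open>n \<in> N\<close> \<open>m \<in> M\<close> by force
      show "\<forall>y. d (act t y) (act (n + m) y) < e"
      proof
        fix y
        have "d (act (t + r) (act (- r) y)) (act (t + r) (act m y)) < e/2"
          using V m[of y] tr by blast
        from cont_pseudometric_triangle_less[OF d this n[of "act m y"]]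
        show "d (act t y) (act (n + m) y) < e"
          by (simp add: flow_add[OF fl] flow_neg_right[OF fl])
      qed
    qed
  qed
  moreover have "finite K"
    unfolding K_def using N(1) M(1) by blast
  ultimately show "\<exists>K. finite K \<and> (\<forall>t\<in>UNIV. \<exists>k\<in>K. \<forall>y. d (act t y) (act k y) < e)"
    by blast
qed

lemma uniformly_totally_bounded_imp_ap_flow:
  fixes act :: "'t::topological_group_add \<Rightarrow> 'x::t2_space \<Rightarrow> 'x"
  assumes cpt: "compact (UNIV :: 'x set)" and fl: "flow act"
    and tb: "\<And>d. cont_pseudometric d \<Longrightarrow> uniformly_totally_bounded d act UNIV"
  shows "ap_flow act"
  unfolding ap_flow_def
proof
  fix \<alpha> :: "('x \<times> 'x) set" assume "\<alpha> \<in> unif"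
  then obtain d where d: "cont_pseudometric d" "\<And>x y. d x y < 1 \<Longrightarrow> (x, y) \<in> \<alpha>"
    using cont_pseudometric_inside_entourage[OF cpt] by blast
  obtain K where "finite K" and K: "\<forall>t. \<exists>k\<in>K. \<forall>y. d (act t y) (act k y) < 1"
    using tb[OF d(1)] unfolding uniformly_totally_bounded_def by (meson UNIV_I zero_less_one)
  define A where "A = {u. \<forall>x. d x (act u x) < 1}"
  have "syndetic A"
    unfolding syndetic_def
  proof (intro exI conjI allI)
    show "compact K"
      using \<open>finite K\<close> by (rule finite_imp_compact)
    fix t
    obtain k where "k \<in> K" and k: "\<And>y. d (act (- t) y) (act k y) < 1"
      using K by blast
    have "d x (act (k + t) x) < 1" for x
      using k[of "act t x"] by (simp add: flow_add[OF fl] flow_neg_left[OF fl])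
    then have "k + t \<in> A"
      unfolding A_def by blast
    with \<open>k \<in> K\<close> show "(\<lambda>k. k + t) ` K \<inter> A \<noteq> {}"
      by blast
  qed
  moreover have "(\<lambda>s. act s x) ` A \<subseteq> ent \<alpha> {x}" for x
    using d(2) unfolding A_def ent_def by blast
  ultimately show "\<exists>A. syndetic A \<and> (\<forall>x. (\<lambda>s. act s x) ` A \<subseteq> ent \<alpha> {x})"
    by blast
qed

theorem theorem2p9:
  fixes act :: "'t::{topological_group_add, t2_space} \<Rightarrow> 'x::t2_space \<Rightarrow> 'x"
    and S :: "'t set"
  assumes "compact (UNIV :: 'x set)"
    and "flow act"
    and "subsemigroup S" and "thick S"
    and "lyapunov_stable act S"
  shows "ap_flow act"
proof (rule uniformly_totally_bounded_imp_ap_flow[OF assms(1,2)])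
  have eq: "uniformly_equicontinuous d act S" if "cont_pseudometric d" for d
    using lyapunov_stable_imp_uniformly_equicontinuous[OF assms(5) that] .
  have tb: "uniformly_totally_bounded d act S" if "cont_pseudometric d" for d
    using uniformly_equicontinuous_imp_totally_bounded[OF assms(1,1) that eq[OF that]] .
  have tb_uminus: "uniformly_totally_bounded d act (uminus ` S)" if "cont_pseudometric d" for d
    using uniformly_totally_bounded_uminus[OF assms(2) that assms(3) tb[OF that]] .
  fix d :: "'x \<Rightarrow> 'x \<Rightarrow> real" assume "cont_pseudometric d"
  then show "uniformly_totally_bounded d act UNIV"
    using thick_uniformly_totally_bounded_UNIV[OF assms(1,2,4)] eq tb tb_uminus by blast
qed

end
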